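(* Let $F\in\mathcal{F}^n$ with radial function $\rho$. For $x\in\mathbf{S}^n$, let $M(x)$ be an outward normal vector to a hyperplane supporting $F$ at $r(x)=\rho(x)x$, rescaled so that $\langle M(x),x\rangle=\rho(x)$. Then $v=-M(x)+\rho(x)x\in\partial\rho(x)$. Conversely, for each $v\in\partial\rho(x)$ there exists a unique hyperplane supporting $F$ at $r(x)$ with outward normal $M(x)$ such that $v=-M(x)+\rho(x)x$.
   Context: $\mathbf{S}^n$ is the unit sphere in $\mathbb{R}^{n+1}$, $n\ge1$, centered at the origin $\mathcal{O}$. $\mathcal{F}^n$ is the set of boundaries of compact convex sets in $\mathbb{R}^{n+1}$ containing $\mathcal{O}$ in their interior; for $F\in\mathcal{F}^n$ its radial function $\rho(x)$ is the distance from $\mathcal{O}$ to the point where the ray in direction $x\in\mathbf{S}^n$ meets $F$. For $f\in C(\mathbf{S}^n)$ and $x_0\in\mathbf{S}^n$, with tangent space $T\mathbf{S}^n_{x_0}=\{v\in\mathbb{R}^{n+1}:\langle v,x_0\rangle=0\}$, the subdifferential of $f$ at $x_0$ is $\partial f(x_0)=\{v\in T\mathbf{S}^n_{x_0}: f(x)\langle -v+f(x_0)x_0,x\rangle\le f^2(x_0)\ \forall x\in\mathbf{S}^n\}$. *)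

theory Defs
  imports "HOL-Analysis.Analysis"
begin

text \<open>F in the class F^n: the boundary of a compact convex set K in R^(n+1)
  containing the origin in its interior.\<close>
definition convex_body_origin :: "'a::euclidean_space set \<Rightarrow> bool" where
  "convex_body_origin K \<longleftrightarrow> compact K \<and> convex K \<and> 0 \<in> interior K"

definition radial_function :: "'a::euclidean_space set \<Rightarrow> 'a \<Rightarrow> real" where
  "radial_function K x = (THE r. 0 \<le> r \<and> r *\<^sub>R x \<in> frontier K)"

definition sphere_subdiff :: "('a::euclidean_space \<Rightarrow> real) \<Rightarrow> 'a \<Rightarrow> 'a set" where
  "sphere_subdiff f x0 = {v. inner v x0 = 0 \<and>
     (\<forall>x\<in>sphere 0 1. f x * inner (- v + f x0 *\<^sub>R x0) x \<le> (f x0)\<^sup>2)}"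

definition supporting_hyperplane :: "'a::euclidean_space set \<Rightarrow> 'a \<Rightarrow> 'a set \<Rightarrow> 'a \<Rightarrow> bool" where
  "supporting_hyperplane K p H N \<longleftrightarrow>
     N \<noteq> 0 \<and> H = {y. inner N y = inner N p} \<and> (\<forall>y\<in>K. inner N y \<le> inner N p)"

end

theory Submission
  imports Defs
begin

(* Writing the points of K as t z with z on the sphere and 0 <= t <= rho z, a functional <M, .>
   is bounded on K by c >= 0 iff rho z <M, z> <= c for all unit z. For M = rho(x) x - v with
   <M, x> = rho(x), the bound c = rho(x)^2 = <M, rho(x) x> is the support condition at rho(x) x,
   while the inequality over the sphere is the defining inequality of v in the subdifferential of
   rho at x. So v <-> M is a bijection between the subdifferential and the normalised outward
   normals at rho(x) x, and a normal determines its hyperplane. *)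

lemma scaleR_mem_interior_convex_shrink:
  fixes K :: "'a::euclidean_space set"
  assumes "convex K" "0 \<in> interior K" "t *\<^sub>R z \<in> closure K" "0 \<le> s" "s < t"
  shows "s *\<^sub>R z \<in> interior K"
proof -
  have "t > 0" using assms(4,5) by linarith
  have "t *\<^sub>R z - (1 - s / t) *\<^sub>R (t *\<^sub>R z - 0) \<in> interior K"
    by (rule mem_interior_closure_convex_shrink[OF assms(1-3)])
       (use \<open>t > 0\<close> assms(4,5) in \<open>auto simp: field_simps\<close>)
  moreover have "t *\<^sub>R z - (1 - s / t) *\<^sub>R (t *\<^sub>R z - 0) = s *\<^sub>R z"
    using \<open>t > 0\<close> by (simp add: algebra_simps)
  ultimately show ?thesis by simp
qed

lemma ray_frontier_unique:
  fixes K :: "'a::euclidean_space set"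
  assumes "convex K" "0 \<in> interior K"
    and "0 \<le> s" "s *\<^sub>R z \<in> frontier K" "0 \<le> t" "t *\<^sub>R z \<in> frontier K"
  shows "s = t"
proof -
  have no_smaller: "\<not> a < b" if "0 \<le> a" "a *\<^sub>R z \<in> frontier K" "b *\<^sub>R z \<in> frontier K" for a b
    using scaleR_mem_interior_convex_shrink[OF assms(1,2), of b z a] that
    by (auto simp: frontier_def)
  show ?thesis using no_smaller[of s t] no_smaller[of t s] assms(3-6) by linarith
qed

lemma radial_function_eqI:
  assumes "convex_body_origin K" "0 \<le> t" "t *\<^sub>R z \<in> frontier K"
  shows "radial_function K z = t"
  unfolding radial_function_def
proof (rule the_equality)
  show "\<And>r. 0 \<le> r \<and> r *\<^sub>R z \<in> frontier K \<Longrightarrow> r = t"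
    using ray_frontier_unique assms by (auto simp: convex_body_origin_def)
qed (use assms in simp)

lemma radial_function_frontier:
  assumes K: "convex_body_origin K" and "z \<noteq> 0"
  shows "0 < radial_function K z" "radial_function K z *\<^sub>R z \<in> frontier K"
proof -
  obtain d where "0 < d" "d *\<^sub>R z \<in> frontier K"
    using ray_to_frontier[of K 0 z] K \<open>z \<noteq> 0\<close>
    by (auto simp: convex_body_origin_def compact_imp_bounded)
  moreover from this have "radial_function K z = d"
    by (intro radial_function_eqI[OF K]) simp_all
  ultimately show "0 < radial_function K z" "radial_function K z *\<^sub>R z \<in> frontier K"
    by simp_all
qed

lemma radial_function_mem:
  assumes K: "convex_body_origin K" and "z \<noteq> 0"
  shows "radial_function K z *\<^sub>R z \<in> K"
proof -
  have "closed K" using K by (simp add: convex_body_origin_def compact_imp_closed)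
  then show ?thesis
    using radial_function_frontier(2)[OF assms] frontier_subset_closed by blast
qed

lemma le_radial_function:
  assumes K: "convex_body_origin K" and z: "z \<noteq> 0" and "0 \<le> t" "t *\<^sub>R z \<in> K"
  shows "t \<le> radial_function K z"
proof (rule ccontr)
  assume "\<not> t \<le> radial_function K z"
  then have "radial_function K z *\<^sub>R z \<in> interior K"
    using K radial_function_frontier[OF K z] assms(3,4)
    by (intro scaleR_mem_interior_convex_shrink[of K t])
       (auto simp: convex_body_origin_def closure_subset[THEN subsetD])
  then show False
    using radial_function_frontier(2)[OF K z] by (simp add: frontier_def)
qed

lemma inner_le_on_body_iff_radial:
  fixes K :: "'a::euclidean_space set"
  assumes K: "convex_body_origin K" and "0 \<le> c"
  shows "(\<forall>y\<in>K. inner M y \<le> c) \<longleftrightarrow>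
         (\<forall>z\<in>sphere 0 1. radial_function K z * inner M z \<le> c)"
proof
  assume "\<forall>y\<in>K. inner M y \<le> c"
  show "\<forall>z\<in>sphere 0 1. radial_function K z * inner M z \<le> c"
  proof
    fix z :: 'a assume "z \<in> sphere 0 1"
    then have "radial_function K z *\<^sub>R z \<in> K" by (intro radial_function_mem[OF K]) auto
    with \<open>\<forall>y\<in>K. inner M y \<le> c\<close> show "radial_function K z * inner M z \<le> c" by fastforce
  qed
next
  assume sphere_le: "\<forall>z\<in>sphere 0 1. radial_function K z * inner M z \<le> c"
  show "\<forall>y\<in>K. inner M y \<le> c"
  proof
    fix y assume "y \<in> K"
    show "inner M y \<le> c"
    proof (cases "y = 0")
      case False
      define z where "z = (1 / norm y) *\<^sub>R y"
      have z: "z \<in> sphere 0 1" "z \<noteq> 0" and y_eq: "y = norm y *\<^sub>R z"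
        using False by (auto simp: z_def)
      have "norm y \<le> radial_function K z"
        using le_radial_function[OF K z(2)] y_eq \<open>y \<in> K\<close> by (metis norm_ge_zero)
      then have "norm y * inner M z \<le> max 0 (radial_function K z * inner M z)"
        by (cases "inner M z \<le> 0") (simp_all add: le_max_iff_disj mult_nonneg_nonpos mult_right_mono)
      also have "\<dots> \<le> c" using sphere_le z(1) \<open>0 \<le> c\<close> by simp
      finally show ?thesis by (subst y_eq) simp
    qed (use \<open>0 \<le> c\<close> in simp)
  qed
qed

lemma sphere_subdiff_radial_function:
  fixes K :: "'a::euclidean_space set"
  assumes K: "convex_body_origin K" and x: "x \<in> sphere 0 1"
  defines "\<rho> \<equiv> radial_function K"
  shows "sphere_subdiff \<rho> x =
    (\<lambda>M. - M + \<rho> x *\<^sub>R x) ` {M. inner M x = \<rho> x \<and> (\<forall>y\<in>K. inner M y \<le> inner M (\<rho> x *\<^sub>R x))}"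
proof -
  have "inner x x = 1" using x by (simp add: dot_square_norm)
  then have inner_x: "inner (- M + \<rho> x *\<^sub>R x) x = \<rho> x - inner M x" for M
    by (simp add: inner_diff_left)
  have "inner M (\<rho> x *\<^sub>R x) = (\<rho> x)\<^sup>2" if "inner M x = \<rho> x" for M
    using that by (simp add: power2_eq_square)
  then have support_iff: "(\<forall>y\<in>K. inner M y \<le> inner M (\<rho> x *\<^sub>R x)) \<longleftrightarrow>
      (\<forall>z\<in>sphere 0 1. \<rho> z * inner M z \<le> (\<rho> x)\<^sup>2)" if "inner M x = \<rho> x" for M
    using inner_le_on_body_iff_radial[OF K] that unfolding \<rho>_def by simp
  show ?thesis
  proof (intro set_eqI iffI)
    fix v assume "v \<in> sphere_subdiff \<rho> x"
    then have "inner (\<rho> x *\<^sub>R x - v) x = \<rho> x"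
      and "\<forall>z\<in>sphere 0 1. \<rho> z * inner (\<rho> x *\<^sub>R x - v) z \<le> (\<rho> x)\<^sup>2"
      using inner_x[of "\<rho> x *\<^sub>R x - v"] by (auto simp: sphere_subdiff_def)
    with support_iff show "v \<in> (\<lambda>M. - M + \<rho> x *\<^sub>R x) `
        {M. inner M x = \<rho> x \<and> (\<forall>y\<in>K. inner M y \<le> inner M (\<rho> x *\<^sub>R x))}"
      by (intro image_eqI[where x = "\<rho> x *\<^sub>R x - v"]) auto
  next
    fix v assume "v \<in> (\<lambda>M. - M + \<rho> x *\<^sub>R x) `
        {M. inner M x = \<rho> x \<and> (\<forall>y\<in>K. inner M y \<le> inner M (\<rho> x *\<^sub>R x))}"
    then obtain M where "v = - M + \<rho> x *\<^sub>R x" "inner M x = \<rho> x"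
      and "\<forall>y\<in>K. inner M y \<le> inner M (\<rho> x *\<^sub>R x)"
      by blast
    with inner_x support_iff show "v \<in> sphere_subdiff \<rho> x"
      by (simp add: sphere_subdiff_def)
  qed
qed

theorem proposition9:
  fixes K :: "'a::euclidean_space set" and x :: 'a
  assumes "DIM('a) \<ge> 2"
    and "convex_body_origin K"
    and "x \<in> sphere 0 1"
  shows "(\<forall>H M. supporting_hyperplane K (radial_function K x *\<^sub>R x) H M
              \<and> inner M x = radial_function K x
            \<longrightarrow> - M + radial_function K x *\<^sub>R x \<in> sphere_subdiff (radial_function K) x)
       \<and> (\<forall>v\<in>sphere_subdiff (radial_function K) x.
            \<exists>!H. \<exists>M. supporting_hyperplane K (radial_function K x *\<^sub>R x) H M
              \<and> inner M x = radial_function K x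
              \<and> v = - M + radial_function K x *\<^sub>R x)"
proof -
  let ?\<rho> = "radial_function K"
  let ?p = "?\<rho> x *\<^sub>R x"
  let ?normals = "{M. inner M x = ?\<rho> x \<and> (\<forall>y\<in>K. inner M y \<le> inner M ?p)}"
  have subdiff: "sphere_subdiff ?\<rho> x = (\<lambda>M. - M + ?p) ` ?normals"
    using sphere_subdiff_radial_function[OF assms(2,3)] .
  have "x \<noteq> 0" using assms(3) by auto
  then have "0 < ?\<rho> x" by (rule radial_function_frontier(1)[OF assms(2)])
  then have supporting_iff: "supporting_hyperplane K ?p H M \<and> inner M x = ?\<rho> x \<longleftrightarrow>
      M \<in> ?normals \<and> H = {y. inner M y = inner M ?p}" for H M
    by (auto simp: supporting_hyperplane_def)
  show ?thesis
  proof (intro conjI allI impI ballI)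
    fix H M assume "supporting_hyperplane K ?p H M \<and> inner M x = ?\<rho> x"
    then show "- M + ?p \<in> sphere_subdiff ?\<rho> x" unfolding subdiff supporting_iff by blast
  next
    fix v assume "v \<in> sphere_subdiff ?\<rho> x"
    then obtain M where v: "v = - M + ?p" "M \<in> ?normals" unfolding subdiff by blast
    show "\<exists>!H. \<exists>M. supporting_hyperplane K ?p H M \<and> inner M x = ?\<rho> x \<and> v = - M + ?p"
    proof (rule ex1I[of _ "{y. inner M y = inner M ?p}"])
      show "\<exists>M'. supporting_hyperplane K ?p {y. inner M y = inner M ?p} M' \<and>
          inner M' x = ?\<rho> x \<and> v = - M' + ?p"
        using supporting_iff v by blast
    next
      fix H assume "\<exists>M'. supporting_hyperplane K ?p H M' \<and> inner M' x = ?\<rho> x \<and> v = - M' + ?p"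
      then show "H = {y. inner M y = inner M ?p}" using supporting_iff v(1) by auto
    qed
  qed
qed

end
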